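(* Let $Y$ be an Abelian group, let $\varphi_1,\dots,\varphi_m$ and $\psi_1,\dots,\psi_n$ be functions on $Y$, let $a_1,\dots,a_m,b_1,\dots,b_m,c_1,\dots,c_n,d_1,\dots,d_n$ be integers, and let $q(u,v)$ be a continuous polynomial of degree $l$ on $Y^2$, such that $$\sum_{j=1}^m\varphi_j(a_ju+b_jv)=\sum_{j=1}^n\psi_j(c_ju+d_jv)+q(u,v),\quad u,v\in Y.$$ Then for each $j\in\{1,\dots,m\}$, for all $u,v,h,k,k_1,\dots,k_n\in Y$ and all $l_i\in Y$ ($i\in\{1,\dots,m\}\setminus\{j\}$), $$\Big[\Delta_{a_jh+b_jk}^{l+1}\prod_{i\in\{1,\dots,m\},\,i\neq j}\Delta_{(a_jb_i-b_ja_i)l_i}\prod_{s=1}^n\Delta_{(a_jd_s-b_jc_s)k_s}\varphi_j\Big](a_ju+b_jv)=0,$$ where the product denotes composition of the (commuting) difference operators. Moreover, if $q\equiv 0$, the same holds with the operator $\Delta_{a_jh+b_jk}^{l+1}$ omitted.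
   Context: For a function $f$ on an Abelian group $G$ and $h\in G$, $\Delta_hf(y)=f(y+h)-f(y)$. A function $f$ on $G$ is a polynomial if $\Delta_h^{l+1}f(y)=0$ for some $l$ and all $y,h\in G$; the minimal such $l$ is its degree. *)

theory Defs
  imports "HOL-Analysis.Analysis"
begin

definition zmult :: "int \<Rightarrow> 'a::ab_group_add \<Rightarrow> 'a" where
  "zmult k y = (if 0 \<le> k then (\<Sum>_<nat k. y) else - (\<Sum>_<nat (- k). y))"

definition Delta :: "'a::ab_group_add \<Rightarrow> ('a \<Rightarrow> 'b::ab_group_add) \<Rightarrow> 'a \<Rightarrow> 'b" where
  "Delta h f = (\<lambda>y. f (y + h) - f y)"

definition Deltas :: "'a::ab_group_add list \<Rightarrow> ('a \<Rightarrow> 'b::ab_group_add) \<Rightarrow> 'a \<Rightarrow> 'b" where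
  "Deltas hs f = foldr Delta hs f"

definition poly_le :: "('a::ab_group_add \<Rightarrow> 'b::ab_group_add) \<Rightarrow> nat \<Rightarrow> bool" where
  "poly_le f l \<longleftrightarrow> (\<forall>y h. (Delta h ^^ (Suc l)) f y = 0)"

definition poly_degree :: "('a::ab_group_add \<Rightarrow> 'b::ab_group_add) \<Rightarrow> nat \<Rightarrow> bool" where
  "poly_degree f l \<longleftrightarrow> poly_le f l \<and> (\<forall>l'<l. \<not> poly_le f l')"

end

theory Submission
  imports Defs
begin

(* Write L_i(u,v) = a_i u + b_i v and M_s(u,v) = c_s u + d_s v; these are additive maps Y^2 -> Y.
   The shift (b_i l_i, -a_i l_i) lies in the kernel of L_i, so the difference operator along it
   annihilates phi_i o L_i; likewise (d_s k_s, -c_s k_s) annihilates psi_s o M_s, and the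
   (l+1)-fold difference along (h,k) annihilates q. Applying all these operators to both sides
   of the functional equation leaves only the term phi_j o L_j, and a difference of phi_j o L_j
   along a shift e is the difference of phi_j along L_j e. Finally L_j maps the two kinds of
   shifts to (a_j b_i - b_j a_i) l_i and (a_j d_s - b_j c_s) k_s. *)

lemma zmult_zero_left [simp]: "zmult 0 y = 0"
  by (simp add: zmult_def)

lemma zmult_one_left [simp]: "zmult 1 y = y"
  by (simp add: zmult_def)

lemma zmult_minus_left: "zmult (- k) y = - zmult k y"
  by (simp add: zmult_def)

lemma zmult_add_one: "zmult (k + 1) y = zmult k y + (y::'a::ab_group_add)"
proof (cases "0 \<le> k")
  case True
  then have "nat (k + 1) = Suc (nat k)" by simp
  with True show ?thesis by (simp add: zmult_def add.commute)
next
  case False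
  then consider "k = -1" | "nat (- k) = Suc (nat (- (k + 1)))" "k + 1 < 0" by linarith
  then show ?thesis
    by cases (use False in \<open>simp_all add: zmult_def algebra_simps\<close>)
qed

lemma zmult_diff_one: "zmult (k - 1) y = zmult k y - (y::'a::ab_group_add)"
  using zmult_add_one[of "k - 1" y] by simp

lemma zmult_add_left: "zmult (k + k') y = zmult k y + zmult k' (y::'a::ab_group_add)"
proof (induction k' rule: int_induct[where k = 0])
  case (step1 i)
  then show ?case by (simp add: zmult_add_one flip: add.assoc)
next
  case (step2 i)
  have "zmult (k + (i - 1)) y = zmult (k + i) y - y"
    by (metis add_diff_eq zmult_diff_one)
  with step2 show ?case by (simp add: zmult_diff_one)
qed simp

lemma zmult_diff_left: "zmult (k - k') y = zmult k y - zmult k' (y::'a::ab_group_add)"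
  using zmult_add_left[of k "- k'" y] by (simp add: zmult_minus_left)

lemma zmult_add_right: "zmult k (x + y) = zmult k x + zmult k (y::'a::ab_group_add)"
  by (induction k rule: int_induct[where k = 0])
    (simp_all add: zmult_add_one zmult_diff_one algebra_simps)

lemma zmult_mult: "zmult (k * k') y = zmult k (zmult k' (y::'a::ab_group_add))"
proof (induction k rule: int_induct[where k = 0])
  case (step1 i)
  then show ?case by (simp add: distrib_right zmult_add_left zmult_add_one)
next
  case (step2 i)
  then show ?case by (simp add: left_diff_distrib zmult_diff_left zmult_diff_one)
qed simp

interpretation zmult: module "zmult :: int \<Rightarrow> 'a::ab_group_add \<Rightarrow> 'a"
  by standard (simp_all add: zmult_add_left zmult_add_right zmult_mult)

definition zlin :: "int \<Rightarrow> int \<Rightarrow> 'a \<times> 'a \<Rightarrow> 'a::ab_group_add" where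
  "zlin a b p = zmult a (fst p) + zmult b (snd p)"

lemma additive_zlin: "Modules.additive (zlin a b)"
  by standard (simp add: zlin_def zmult.scale_right_distrib algebra_simps)

lemma zlin_cross: "zlin a' b' (zmult b y, - zmult a y) = zmult (a' * b - b' * a) y"
  by (simp add: zlin_def zmult.scale_left_diff_distrib)

lemma Deltas_Nil [simp]: "Deltas [] f = f"
  by (simp add: Deltas_def)

lemma Deltas_Cons [simp]: "Deltas (h # hs) f = Delta h (Deltas hs f)"
  by (simp add: Deltas_def)

lemma Deltas_append: "Deltas (hs @ hs') f = Deltas hs (Deltas hs' f)"
  by (simp add: Deltas_def)

lemma Deltas_replicate: "Deltas (replicate n h) f = (Delta h ^^ n) f"
  by (induction n) simp_all

lemma Delta_commute: "Delta h (Delta h' f) = Delta h' (Delta h f)"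
  by (simp add: Delta_def algebra_simps)

lemma Delta_Deltas_commute: "Delta h (Deltas hs f) = Deltas hs (Delta h f)"
  by (induction hs) (simp_all add: Delta_commute)

lemma Deltas_commute: "Deltas hs (Deltas hs' f) = Deltas hs' (Deltas hs f)"
  by (induction hs) (simp_all add: Delta_Deltas_commute)

lemma Deltas_zero [simp]: "Deltas hs (\<lambda>_. 0) = (\<lambda>_. 0)"
  by (induction hs) (simp_all add: Delta_def)

lemma Deltas_eq_0_if_zero_shift: "0 \<in> set hs \<Longrightarrow> Deltas hs f = (\<lambda>_. 0)"
  by (induction hs) (auto simp: Delta_def)

lemma Deltas_add: "Deltas hs (\<lambda>p. f p + g p) = (\<lambda>p. Deltas hs f p + Deltas hs g p)"
  by (induction hs) (simp_all add: Delta_def algebra_simps)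

lemma Deltas_sum: "Deltas hs (\<lambda>p. \<Sum>i\<in>I. f i p) = (\<lambda>p. \<Sum>i\<in>I. Deltas hs (f i) p)"
  by (induction hs) (simp_all add: Delta_def sum_subtractf)

lemma Deltas_comp_additive:
  assumes "Modules.additive L"
  shows "Deltas hs (\<lambda>p. f (L p)) = (\<lambda>p. Deltas (map L hs) f (L p))"
  by (induction hs) (simp_all add: Delta_def additive.add[OF assms])

lemma Deltas_comp_additive_eq_0:
  assumes "Modules.additive L" and "h \<in> set hs" and "L h = 0"
  shows "Deltas hs (\<lambda>p. f (L p)) = (\<lambda>_. 0)"
proof -
  have "0 \<in> set (map L hs)"
    using assms(2,3) by (metis image_eqI list.set_map)
  then show ?thesis
    by (simp add: Deltas_comp_additive[OF assms(1)] Deltas_eq_0_if_zero_shift)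
qed

lemma Deltas_sum_comp_additive_eq_0:
  assumes "\<And>i. i \<in> I \<Longrightarrow> Modules.additive (L i)" and "\<And>i. i \<in> I \<Longrightarrow> \<exists>h\<in>set hs. L i h = 0"
  shows "Deltas hs (\<lambda>p. \<Sum>i\<in>I. f i (L i p)) = (\<lambda>_. 0)"
proof -
  have "Deltas hs (\<lambda>p. f i (L i p)) = (\<lambda>_. 0)" if "i \<in> I" for i
    using assms that Deltas_comp_additive_eq_0 by metis
  then show ?thesis
    by (simp add: Deltas_sum)
qed

lemma Deltas_sum_comp_additive_single:
  assumes "finite I" and "j \<in> I" and "\<And>i. i \<in> I \<Longrightarrow> Modules.additive (L i)"
    and "\<And>i. i \<in> I - {j} \<Longrightarrow> \<exists>h\<in>set hs. L i h = 0"
  shows "Deltas hs (\<lambda>p. \<Sum>i\<in>I. f i (L i p)) p = Deltas (map (L j) hs) (f j) (L j p)"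
proof -
  have "(\<lambda>p. \<Sum>i\<in>I. f i (L i p)) = (\<lambda>p. f j (L j p) + (\<Sum>i\<in>I - {j}. f i (L i p)))"
    using assms(1,2) by (simp add: sum.remove)
  then have "Deltas hs (\<lambda>p. \<Sum>i\<in>I. f i (L i p)) p
      = Deltas hs (\<lambda>p. f j (L j p)) p + Deltas hs (\<lambda>p. \<Sum>i\<in>I - {j}. f i (L i p)) p"
    by (simp add: Deltas_add)
  also have "Deltas hs (\<lambda>p. \<Sum>i\<in>I - {j}. f i (L i p)) = (\<lambda>_. 0)"
    using assms(3,4) by (intro Deltas_sum_comp_additive_eq_0) auto
  finally show ?thesis
    by (simp add: Deltas_comp_additive assms(2,3))
qed

lemma functional_equation_component_annihilated:
  fixes \<phi> \<psi> :: "nat \<Rightarrow> 'a::ab_group_add \<Rightarrow> 'b::ab_group_add" and q :: "'a \<times> 'a \<Rightarrow> 'b"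
  assumes eq: "\<And>u v. (\<Sum>j=1..m. \<phi> j (zmult (a j) u + zmult (b j) v))
               = (\<Sum>j=1..n. \<psi> j (zmult (c j) u + zmult (d j) v)) + q (u, v)"
    and j: "j \<in> {1..m}"
    and q_annihilated: "(Delta (h, k) ^^ r) q = (\<lambda>_. 0)"
  shows "(Delta (zmult (a j) h + zmult (b j) k) ^^ r)
           (Deltas (map (\<lambda>i. zmult (a j * b i - b j * a i) (ls i)) (filter (\<lambda>i. i \<noteq> j) [1..<Suc m])
                    @ map (\<lambda>s. zmult (a j * d s - b j * c s) (ks s)) [1..<Suc n])
             (\<phi> j))
           (zmult (a j) u + zmult (b j) v) = 0"
proof -
  let ?L = "\<lambda>i. zlin (a i) (b i)" and ?M = "\<lambda>s. zlin (c s) (d s)"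
  define H where "H = map (\<lambda>i. (zmult (b i) (ls i), - zmult (a i) (ls i))) (filter (\<lambda>i. i \<noteq> j) [1..<Suc m])
    @ map (\<lambda>s. (zmult (d s) (ks s), - zmult (c s) (ks s))) [1..<Suc n]"
  define hs where "hs = replicate r (h, k) @ H"
  have "(\<lambda>p. \<Sum>i\<in>{1..m}. \<phi> i (?L i p)) = (\<lambda>p. (\<Sum>s\<in>{1..n}. \<psi> s (?M s p)) + q p)"
    by (simp add: fun_eq_iff zlin_def eq del: One_nat_def)
  then have "Deltas hs (\<lambda>p. \<Sum>i\<in>{1..m}. \<phi> i (?L i p)) (u, v)
      = Deltas hs (\<lambda>p. \<Sum>s\<in>{1..n}. \<psi> s (?M s p)) (u, v) + Deltas hs q (u, v)"
    by (simp add: Deltas_add)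
  also have "Deltas hs (\<lambda>p. \<Sum>s\<in>{1..n}. \<psi> s (?M s p)) = (\<lambda>_. 0)"
  proof (rule Deltas_sum_comp_additive_eq_0[where L = ?M])
    fix s assume "s \<in> {1..n}"
    then show "\<exists>h\<in>set hs. ?M s h = 0"
      by (intro bexI[of _ "(zmult (d s) (ks s), - zmult (c s) (ks s))"])
        (auto simp: hs_def H_def zlin_cross simp del: upt_Suc)
  qed (rule additive_zlin)
  also have "Deltas hs q = Deltas H ((Delta (h, k) ^^ r) q)"
    by (metis hs_def Deltas_append Deltas_commute Deltas_replicate)
  also have "Deltas hs (\<lambda>p. \<Sum>i\<in>{1..m}. \<phi> i (?L i p)) (u, v) = Deltas (map (?L j) hs) (\<phi> j) (?L j (u, v))"
  proof (rule Deltas_sum_comp_additive_single[where L = ?L])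
    fix i assume "i \<in> {1..m} - {j}"
    then show "\<exists>h\<in>set hs. ?L i h = 0"
      by (intro bexI[of _ "(zmult (b i) (ls i), - zmult (a i) (ls i))"])
        (auto simp: hs_def H_def zlin_cross simp del: upt_Suc)
  qed (use j additive_zlin in auto)
  finally have "Deltas (map (?L j) hs) (\<phi> j) (?L j (u, v)) = 0"
    by (simp add: q_annihilated)
  moreover have "map (?L j) H = map (\<lambda>i. zmult (a j * b i - b j * a i) (ls i)) (filter (\<lambda>i. i \<noteq> j) [1..<Suc m])
                    @ map (\<lambda>s. zmult (a j * d s - b j * c s) (ks s)) [1..<Suc n]"
    by (simp add: H_def zlin_cross del: upt_Suc)
  ultimately show ?thesis
    by (simp add: hs_def zlin_def Deltas_append Deltas_replicate del: upt_Suc)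
qed

theorem lemma4:
  fixes \<phi> :: "nat \<Rightarrow> 'a::{ab_group_add,topological_space} \<Rightarrow> complex"
    and \<psi> :: "nat \<Rightarrow> 'a \<Rightarrow> complex"
    and a b c d :: "nat \<Rightarrow> int"
    and q :: "'a \<times> 'a \<Rightarrow> complex"
    and m n l :: nat
  assumes q_cont: "continuous_on UNIV q"
    and q_poly: "poly_degree q l"
    and eq: "\<And>u v. (\<Sum>j=1..m. \<phi> j (zmult (a j) u + zmult (b j) v))
               = (\<Sum>j=1..n. \<psi> j (zmult (c j) u + zmult (d j) v)) + q (u, v)"
  shows "(\<forall>j\<in>{1..m}. \<forall>u v h k. \<forall>ls ks :: nat \<Rightarrow> 'a.
            (Delta (zmult (a j) h + zmult (b j) k) ^^ Suc l)
              (Deltas (map (\<lambda>i. zmult (a j * b i - b j * a i) (ls i)) (filter (\<lambda>i. i \<noteq> j) [1..<Suc m])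
                       @ map (\<lambda>s. zmult (a j * d s - b j * c s) (ks s)) [1..<Suc n])
                 (\<phi> j))
              (zmult (a j) u + zmult (b j) v) = 0)
       \<and> (q = (\<lambda>_. 0) \<longrightarrow>
          (\<forall>j\<in>{1..m}. \<forall>u v. \<forall>ls ks :: nat \<Rightarrow> 'a.
            Deltas (map (\<lambda>i. zmult (a j * b i - b j * a i) (ls i)) (filter (\<lambda>i. i \<noteq> j) [1..<Suc m])
                    @ map (\<lambda>s. zmult (a j * d s - b j * c s) (ks s)) [1..<Suc n])
              (\<phi> j) (zmult (a j) u + zmult (b j) v) = 0))"
proof -
  note annihilated = functional_equation_component_annihilated[where \<phi> = \<phi> and \<psi> = \<psi>, OF eq]
  have "(Delta e ^^ Suc l) q = (\<lambda>_. 0)" for e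
    using q_poly unfolding poly_degree_def poly_le_def fun_eq_iff by blast
  moreover have "(Delta e ^^ 0) q = (\<lambda>_. 0)" if "q = (\<lambda>_. 0)" for e
    using that by simp
  ultimately show ?thesis
    by (intro conjI impI ballI allI annihilated[where r = "Suc l"] annihilated[where r = 0, unfolded funpow_0])
qed

end
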